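(* Let $(G,k)$ be an instance of \textsc{Bicolored $P_3$ Deletion} and let $e_1,e_2,e_3$ be three distinct edges of $G$ such that $e_1$ forms a bicolored $P_3$ with $e_2$ and $e_1$ forms a bicolored $P_3$ with $e_3$. Then $(G,k)$ is a yes-instance if and only if $(G-e_1,k-1)$ is a yes-instance or $(G-\{e_2,e_3\},k-2)$ is a yes-instance.
   Context: A two-colored graph $G=(V,E_r,E_b)$ is a finite simple undirected graph whose edge set $E=E_r\uplus E_b$ is partitioned into red and blue edges. A bicolored $P_3$ is an induced subgraph on three vertices $u,v,w$ with edges $\{u,v\},\{v,w\}$ of different colors and $\{u,w\}\notin E$; these two edges are said to form a bicolored $P_3$. \textsc{Bicolored $P_3$ Deletion}: given $G$ and an integer $k$, decide whether some $S\subseteq E$ with $|S|\le k$ makes $G-S$ free of induced bicolored $P_3$s (no-instance if $k<0$). *)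

theory Defs
  imports Main
begin

definition two_colored_graph :: "'a set \<Rightarrow> 'a set set \<Rightarrow> 'a set set \<Rightarrow> bool" where
  "two_colored_graph V Er Eb \<longleftrightarrow> finite V \<and> Er \<inter> Eb = {} \<and>
     (\<forall>e \<in> Er \<union> Eb. \<exists>u v. e = {u, v} \<and> u \<noteq> v \<and> u \<in> V \<and> v \<in> V)"

definition forms_bicolored_P3 :: "'a set set \<Rightarrow> 'a set set \<Rightarrow> 'a set \<Rightarrow> 'a set \<Rightarrow> bool" where
  "forms_bicolored_P3 Er Eb e f \<longleftrightarrow>
     (\<exists>u v w. u \<noteq> v \<and> v \<noteq> w \<and> u \<noteq> w \<and> e = {u, v} \<and> f = {v, w} \<and>
        ((e \<in> Er \<and> f \<in> Eb) \<or> (e \<in> Eb \<and> f \<in> Er)) \<and> {u, w} \<notin> Er \<union> Eb)"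

definition bicolored_P3_free :: "'a set set \<Rightarrow> 'a set set \<Rightarrow> bool" where
  "bicolored_P3_free Er Eb \<longleftrightarrow> (\<forall>e f. \<not> forms_bicolored_P3 Er Eb e f)"

definition yes_instance :: "'a set \<Rightarrow> 'a set set \<Rightarrow> 'a set set \<Rightarrow> int \<Rightarrow> bool" where
  "yes_instance V Er Eb k \<longleftrightarrow> k \<ge> 0 \<and>
     (\<exists>S. S \<subseteq> Er \<union> Eb \<and> int (card S) \<le> k \<and> bicolored_P3_free (Er - S) (Eb - S))"

end

theory Submission
  imports Defs
begin

text \<open>Every solution must destroy the bicolored P3 formed by e1 and e2, and the one formed by
  e1 and e3; so it contains e1 or both e2 and e3. Conversely, deleting edges D first and then a
  solution S of the smaller instance is a solution S \<union> D of size at most card S + card D.\<close>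

lemma forms_bicolored_P3_Diff:
  assumes "forms_bicolored_P3 Er Eb e f" "e \<notin> S" "f \<notin> S"
  shows "forms_bicolored_P3 (Er - S) (Eb - S) e f"
  using assms unfolding forms_bicolored_P3_def by blast

lemma bicolored_P3_free_Diff_hits:
  assumes "forms_bicolored_P3 Er Eb e f" "bicolored_P3_free (Er - S) (Eb - S)"
  shows "e \<in> S \<or> f \<in> S"
  using assms forms_bicolored_P3_Diff unfolding bicolored_P3_free_def by blast

lemma two_colored_graph_finite_edges:
  assumes "two_colored_graph V Er Eb"
  shows "finite (Er \<union> Eb)"
proof (rule finite_subset)
  show "Er \<union> Eb \<subseteq> Pow V"
  proof
    fix e assume "e \<in> Er \<union> Eb"
    then obtain u v where "e = {u, v}" "u \<in> V" "v \<in> V"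
      using assms unfolding two_colored_graph_def by meson
    then show "e \<in> Pow V" by simp
  qed
  show "finite (Pow V)"
    using assms unfolding two_colored_graph_def by simp
qed

lemma yes_instance_if_yes_instance_Diff:
  assumes "D \<subseteq> Er \<union> Eb" "yes_instance V (Er - D) (Eb - D) (k - int (card D))"
  shows "yes_instance V Er Eb k"
proof -
  obtain S where S: "S \<subseteq> (Er - D) \<union> (Eb - D)" "int (card S) \<le> k - int (card D)"
      "bicolored_P3_free (Er - D - S) (Eb - D - S)" and "k - int (card D) \<ge> 0"
    using assms(2) unfolding yes_instance_def by blast
  have "card (S \<union> D) \<le> card S + card D"
    by (rule card_Un_le)
  moreover have "Er - D - S = Er - (S \<union> D)" "Eb - D - S = Eb - (S \<union> D)"
    by auto
  ultimately show ?thesis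
    unfolding yes_instance_def using S assms(1) \<open>k - int (card D) \<ge> 0\<close>
    by (intro conjI exI[of _ "S \<union> D"]) auto
qed

lemma yes_instance_Diff_if_solution_contains:
  assumes "finite (Er \<union> Eb)" "D \<subseteq> S" "S \<subseteq> Er \<union> Eb" "int (card S) \<le> k"
    and "bicolored_P3_free (Er - S) (Eb - S)"
  shows "yes_instance V (Er - D) (Eb - D) (k - int (card D))"
proof -
  have "finite S"
    using assms(1,3) by (rule finite_subset[rotated])
  then have "card (S - D) = card S - card D" "card D \<le> card S"
    using assms(2) by (auto simp: card_Diff_subset finite_subset card_mono)
  moreover have "Er - D - (S - D) = Er - S" "Eb - D - (S - D) = Eb - S"
    using assms(2) by auto
  ultimately show ?thesis
    unfolding yes_instance_def using assms(3-5)
    by (intro conjI exI[of _ "S - D"]) auto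
qed

theorem lemma5:
  fixes V :: "'a set" and Er Eb :: "'a set set" and k :: int and e1 e2 e3 :: "'a set"
  assumes "two_colored_graph V Er Eb"
    and "e1 \<in> Er \<union> Eb" and "e2 \<in> Er \<union> Eb" and "e3 \<in> Er \<union> Eb"
    and "e1 \<noteq> e2" and "e1 \<noteq> e3" and "e2 \<noteq> e3"
    and "forms_bicolored_P3 Er Eb e1 e2"
    and "forms_bicolored_P3 Er Eb e1 e3"
  shows "yes_instance V Er Eb k \<longleftrightarrow>
           (yes_instance V (Er - {e1}) (Eb - {e1}) (k - 1) \<or>
            yes_instance V (Er - {e2, e3}) (Eb - {e2, e3}) (k - 2))"
proof
  assume "yes_instance V Er Eb k"
  then obtain S where S: "S \<subseteq> Er \<union> Eb" "int (card S) \<le> k" "bicolored_P3_free (Er - S) (Eb - S)"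
    unfolding yes_instance_def by blast
  have fin: "finite (Er \<union> Eb)"
    using assms(1) by (rule two_colored_graph_finite_edges)
  from bicolored_P3_free_Diff_hits[OF assms(8) S(3)] bicolored_P3_free_Diff_hits[OF assms(9) S(3)]
  consider "{e1} \<subseteq> S" | "{e2, e3} \<subseteq> S"
    by blast
  then show "yes_instance V (Er - {e1}) (Eb - {e1}) (k - 1) \<or>
             yes_instance V (Er - {e2, e3}) (Eb - {e2, e3}) (k - 2)"
  proof cases
    case 1
    from yes_instance_Diff_if_solution_contains[OF fin this S] show ?thesis
      by simp
  next
    case 2
    from yes_instance_Diff_if_solution_contains[OF fin this S] show ?thesis
      using assms(7) by simp
  qed
next
  assume "yes_instance V (Er - {e1}) (Eb - {e1}) (k - 1) \<or>
          yes_instance V (Er - {e2, e3}) (Eb - {e2, e3}) (k - 2)"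
  then show "yes_instance V Er Eb k"
  proof
    assume "yes_instance V (Er - {e1}) (Eb - {e1}) (k - 1)"
    then show ?thesis
      using yes_instance_if_yes_instance_Diff[of "{e1}"] assms(2) by simp
  next
    assume "yes_instance V (Er - {e2, e3}) (Eb - {e2, e3}) (k - 2)"
    then show ?thesis
      using yes_instance_if_yes_instance_Diff[of "{e2, e3}"] assms(3,4,7) by simp
  qed
qed

end
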